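(* Let $d\ge 1$ be an integer, let $\mathcal{P}\subset\mathbb{R}^d$ be a nonempty convex polytope all of whose vertices lie in $\mathbb{Z}^d$, let $p$ be a prime number, and let $l=\lfloor \log_p d\rfloor$. Then for every natural number $k>l$, the number of points of $\mathbb{Z}^d$ contained in $p^k\mathcal{P}$ is congruent to $1$ modulo $p^{k-l}$.
   Context: For a set $X\subseteq\mathbb{R}^d$ and $t>0$, $tX=\{tx : x\in X\}$ denotes the image of $X$ under the homothety with center at the origin and ratio $t$. $\lfloor x\rfloor$ denotes the integer part of $x$. *)

theory Defs
  imports "HOL-Analysis.Analysis" "HOL-Number_Theory.Cong"
begin

definition lattice_points :: "(real ^ 'n::finite) set" where
  "lattice_points = {x. \<forall>i. x $ i \<in> \<int>}"

end

theory Submission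
  imports Defs
begin

(* Let L_P(t) be the number of lattice points in the dilate t P, and let \<Delta> be the forward
   difference operator. The proof has two independent halves.

   Arithmetic: if \<Delta>^(d+1) L_P = 0, Newton's forward-difference formula gives
     L_P(p^k) = L_P(0) + \<Sum>(1 \<le> i \<le> d). (\<Delta>^i L_P)(0) * (p^k choose i),
   where L_P(0) = 1, and p^(k-l) divides (p^k choose i) for 1 \<le> i \<le> d < p^(l+1).

   Geometry: \<Delta>^(d+1) L_P = 0 for every nonempty lattice polytope P in R^d (a weak form of
   Ehrhart's theorem). For a lattice simplex this follows by counting barycentric weight vectors.
   In general, coning from a lattice vertex w writes P as the union of the cones over the faces
   cut out by those defining inequalities that are strict at w; any intersection of these cones
   is the cone over a lower-dimensional face, and by inclusion-exclusion the property passes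
   from the intersections to the union. To let the induction on dimension close, it is carried
   out for iterated pyramids conv (a1, conv (a2, ... conv (am, G))) with lattice apexes in
   general position, which are lattice simplices when G is a point or empty. *)

definition fwd_diff :: "(nat \<Rightarrow> 'a::ab_group_add) \<Rightarrow> nat \<Rightarrow> 'a" where
  "fwd_diff f t = f (Suc t) - f t"

(* The N-th forward difference of f vanishes identically, i.e. f agrees with a
   polynomial of degree less than N. *)
definition diff_vanishes :: "nat \<Rightarrow> (nat \<Rightarrow> 'a::ab_group_add) \<Rightarrow> bool" where
  "diff_vanishes N f \<longleftrightarrow> (fwd_diff ^^ N) f = (\<lambda>_. 0)"

lemma fwd_diff_iter_Suc: "(fwd_diff ^^ Suc N) f = (fwd_diff ^^ N) (fwd_diff f)"
  by (simp only: funpow_Suc_right o_def)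

lemma diff_vanishes_fwd_diff: "diff_vanishes N f \<Longrightarrow> diff_vanishes N (fwd_diff f)"
  unfolding diff_vanishes_def fwd_diff_iter_Suc[symmetric] by (simp add: fwd_diff_def fun_eq_iff)

lemma newton_forward:
  fixes f :: "nat \<Rightarrow> 'a::comm_ring_1"
  assumes "diff_vanishes N f"
  shows "f n = (\<Sum>i<N. (fwd_diff ^^ i) f 0 * of_nat (n choose i))"
  using assms
proof (induction n arbitrary: f)
  case 0
  then show ?case
    by (cases N) (simp_all add: diff_vanishes_def fun_eq_iff sum.lessThan_Suc_shift del: sum.lessThan_Suc)
next
  case (Suc n)
  show ?case
  proof (cases N)
    case 0
    then show ?thesis using Suc.prems by (simp add: diff_vanishes_def fun_eq_iff)
  next
    case N: (Suc M)
    have IH_f: "f n = (\<Sum>i<N. (fwd_diff ^^ i) f 0 * of_nat (n choose i))"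
      using Suc.IH Suc.prems by blast
    have IH_df: "fwd_diff f n = (\<Sum>i<N. (fwd_diff ^^ Suc i) f 0 * of_nat (n choose i))"
      using Suc.IH[OF diff_vanishes_fwd_diff[OF Suc.prems]] by (simp only: fwd_diff_iter_Suc)
    have top: "(fwd_diff ^^ N) f 0 = 0"
      using Suc.prems by (simp add: diff_vanishes_def)
    have "f (Suc n) = f n + fwd_diff f n" by (simp add: fwd_diff_def)
    also have "\<dots> = (\<Sum>i<Suc M. (fwd_diff ^^ i) f 0 * of_nat (n choose i))
                   + (\<Sum>i<M. (fwd_diff ^^ Suc i) f 0 * of_nat (n choose i))"
      using IH_f IH_df top N by simp
    also have "\<dots> = (\<Sum>i<Suc M. (fwd_diff ^^ i) f 0 * of_nat (Suc n choose i))"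
      by (simp only: sum.lessThan_Suc_shift binomial_Suc_Suc of_nat_add distrib_left sum.distrib) simp
    finally show ?thesis using N by simp
  qed
qed

lemma diff_vanishes_mono:
  fixes f :: "nat \<Rightarrow> 'a::ab_group_add"
  assumes "diff_vanishes n f" "n \<le> N"
  shows "diff_vanishes N f"
proof -
  have zero: "(fwd_diff ^^ j) (\<lambda>_. 0::'a) = (\<lambda>_. 0)" for j
    by (induction j) (simp_all add: fwd_diff_def fun_eq_iff)
  have "(fwd_diff ^^ N) f = (fwd_diff ^^ (N - n)) ((fwd_diff ^^ n) f)"
    using assms(2) by (metis funpow_add le_add_diff_inverse2 o_apply)
  then show ?thesis using assms(1) zero by (simp add: diff_vanishes_def)
qed

lemma fwd_diff_iter_sum:
  fixes c :: "'j \<Rightarrow> 'a::comm_ring_1"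
  shows "(fwd_diff ^^ N) (\<lambda>t. \<Sum>j\<in>J. c j * g j t) = (\<lambda>t. \<Sum>j\<in>J. c j * (fwd_diff ^^ N) (g j) t)"
proof (induction N)
  case (Suc N)
  then show ?case by (simp add: fwd_diff_def fun_eq_iff sum_subtractf right_diff_distrib)
qed simp

lemma diff_vanishes_sum:
  fixes c :: "'j \<Rightarrow> 'a::comm_ring_1"
  assumes "\<And>j. j \<in> J \<Longrightarrow> diff_vanishes N (g j)"
  shows "diff_vanishes N (\<lambda>t. \<Sum>j\<in>J. c j * g j t)"
  using assms by (simp add: diff_vanishes_def fwd_diff_iter_sum)

(* The backward difference operator, with the convention g (-1) = 0; it arises when
   lattice points of a simplex are counted by removing vertex weights one at a time. *)
definition bwd_diff :: "(nat \<Rightarrow> 'a::ab_group_add) \<Rightarrow> nat \<Rightarrow> 'a" where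
  "bwd_diff g s = (if s = 0 then g 0 else g s - g (s - 1))"

lemma bwd_diff_iter_shift: "(bwd_diff ^^ j) g (s + j) = (fwd_diff ^^ j) g s"
proof (induction j arbitrary: s)
  case (Suc j)
  have "(bwd_diff ^^ Suc j) g (s + Suc j) = (bwd_diff ^^ j) g (Suc s + j) - (bwd_diff ^^ j) g (s + j)"
    by (simp add: bwd_diff_def)
  also have "\<dots> = (fwd_diff ^^ j) g (Suc s) - (fwd_diff ^^ j) g s"
    by (simp only: Suc.IH)
  also have "\<dots> = (fwd_diff ^^ Suc j) g s"
    by (simp add: fwd_diff_def)
  finally show ?case .
qed simp

(* For 1 \<le> i < p^(l+1) and l \<le> k, p^(k-l) divides (p^k choose i): the p-adic
   valuation of i is at most l, and i * (p^k choose i) = p^k * (p^k - 1 choose i - 1). *)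
lemma prime_power_dvd_binomial:
  fixes p k l i :: nat
  assumes p: "prime p" and i: "1 \<le> i" "i < p ^ Suc l" and lk: "l \<le> k"
  shows "p ^ (k - l) dvd (p ^ k choose i)"
proof -
  obtain j where j: "i = Suc j" using i by (cases i) auto
  obtain q where q: "p ^ k = Suc q"
    using p by (metis not0_implies_Suc power_not_zero prime_gt_0_nat not_gr_zero)
  have absorb: "i * (p ^ k choose i) = p ^ k * (q choose j)"
    unfolding j q by (rule Suc_times_binomial)
  define e where "e = multiplicity p i"
  obtain m where m: "i = p ^ e * m" "\<not> p dvd m"
    using multiplicity_decompose'[of i p] i p e_def by (auto simp: prime_nat_iff)
  have "p ^ e \<le> i" using m i by (cases m) auto
  then have "p ^ e < p ^ Suc l" using i by simp
  then have el: "e \<le> l" using p by (metis less_Suc_eq_le power_less_imp_less_exp prime_gt_1_nat)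
  have pk: "p ^ k = p ^ e * p ^ (k - e)" using el lk by (simp flip: power_add)
  have "p ^ e * (m * (p ^ k choose i)) = p ^ e * (p ^ (k - e) * (q choose j))"
    using absorb m pk by (simp add: ac_simps)
  then have "p ^ (k - e) dvd m * (p ^ k choose i)"
    using p by (simp add: prime_gt_0_nat)
  moreover have "coprime (p ^ (k - e)) m"
    using m p by (simp add: prime_imp_coprime)
  ultimately have "p ^ (k - e) dvd (p ^ k choose i)" using coprime_dvd_mult_right_iff by blast
  moreover have "p ^ (k - l) dvd p ^ (k - e)" using el by (simp add: le_imp_power_dvd)
  ultimately show ?thesis using dvd_trans by blast
qed

(* Arithmetic core of the theorem: evaluating Newton's formula at p^k, every term beyond
   the constant one is divisible by p^(k-l). *)
lemma diff_vanishes_prime_power_dvd: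
  fixes f :: "nat \<Rightarrow> int" and p D l k :: nat
  assumes f: "diff_vanishes (Suc D) f" and p: "prime p" and D: "D < p ^ Suc l" and lk: "l \<le> k"
  shows "int (p ^ (k - l)) dvd f (p ^ k) - f 0"
proof -
  have "f (p ^ k) = (\<Sum>i<Suc D. (fwd_diff ^^ i) f 0 * int (p ^ k choose i))"
    by (rule newton_forward[OF f])
  also have "\<dots> = f 0 + (\<Sum>i<D. (fwd_diff ^^ Suc i) f 0 * int (p ^ k choose Suc i))"
    by (simp only: sum.lessThan_Suc_shift) simp
  finally have expand: "f (p ^ k) - f 0 = (\<Sum>i<D. (fwd_diff ^^ Suc i) f 0 * int (p ^ k choose Suc i))"
    by simp
  have "int (p ^ (k - l)) dvd (fwd_diff ^^ Suc i) f 0 * int (p ^ k choose Suc i)" if "i < D" for i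
  proof -
    have "p ^ (k - l) dvd (p ^ k choose Suc i)"
      using that D prime_power_dvd_binomial[OF p _ _ lk] by simp
    then show ?thesis by (metis dvd_mult int_dvd_int_iff)
  qed
  then show ?thesis unfolding expand by (auto intro: dvd_sum)
qed

lemma floor_log_less_power:
  fixes p D :: nat
  assumes p: "p \<ge> 2" and D: "D \<ge> 1"
  shows "D < p ^ Suc (nat \<lfloor>log (real p) (real D)\<rfloor>)"
proof -
  define l where "l = nat \<lfloor>log (real p) (real D)\<rfloor>"
  have "\<lfloor>log (real p) (real D)\<rfloor> = int l" using p D by (simp add: l_def)
  then show ?thesis using floor_log_nat_eq_powr_iff[OF p, of D l] D by (simp add: l_def)
qed

lemma lattice_points_add: "x \<in> lattice_points \<Longrightarrow> y \<in> lattice_points \<Longrightarrow> x + y \<in> lattice_points"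
  by (auto simp: lattice_points_def)

lemma lattice_points_diff: "x \<in> lattice_points \<Longrightarrow> y \<in> lattice_points \<Longrightarrow> x - y \<in> lattice_points"
  by (auto simp: lattice_points_def)

lemma lattice_points_zero: "0 \<in> lattice_points"
  by (auto simp: lattice_points_def)

lemma finite_lattice_points_bounded:
  fixes S :: "(real ^ 'n::finite) set"
  assumes "bounded S"
  shows "finite (lattice_points \<inter> S)"
proof -
  obtain B where B: "\<And>x. x \<in> S \<Longrightarrow> norm x \<le> B" using assms bounded_iff by blast
  define N where "N = \<lceil>B\<rceil>"
  define embed :: "('n \<Rightarrow> int) \<Rightarrow> real ^ 'n" where "embed f = (\<chi> i. real_of_int (f i))" for f
  have "lattice_points \<inter> S \<subseteq> embed ` Pi\<^sub>E UNIV (\<lambda>_. {-N..N})"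
  proof
    fix x assume x: "x \<in> lattice_points \<inter> S"
    have "\<forall>i. \<exists>z. x $ i = real_of_int z"
      using x by (auto simp: lattice_points_def elim!: Ints_cases)
    then obtain f where f: "\<And>i. x $ i = real_of_int (f i)" by metis
    have "f i \<in> {-N..N}" for i
    proof -
      have "\<bar>real_of_int (f i)\<bar> \<le> real_of_int N"
        using B[OF IntD2[OF x]] component_le_norm_cart[of x i] f[of i] le_of_int_ceiling[of B]
        unfolding N_def by arith
      then show ?thesis by auto
    qed
    then have "f \<in> Pi\<^sub>E UNIV (\<lambda>_. {-N..N})" by (simp add: PiE_UNIV_domain)
    moreover have "x = embed f" by (simp add: embed_def vec_eq_iff f)
    ultimately show "x \<in> embed ` Pi\<^sub>E UNIV (\<lambda>_. {-N..N})" by blast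
  qed
  moreover have "finite (Pi\<^sub>E (UNIV::'n set) (\<lambda>_. {-N..N}))" by (rule finite_PiE) auto
  ultimately show ?thesis using finite_subset by blast
qed

definition lattice_count :: "(real ^ 'n::finite) set \<Rightarrow> nat \<Rightarrow> int" where
  "lattice_count X t = int (card (lattice_points \<inter> (\<lambda>x. real t *\<^sub>R x) ` X))"

(* Every nonempty set collapses to the lattice point 0 under the dilation by 0. *)
lemma lattice_count_zero:
  fixes X :: "(real ^ 'n::finite) set"
  assumes "X \<noteq> {}"
  shows "lattice_count X 0 = 1"
proof -
  have "(\<lambda>x. real 0 *\<^sub>R x) ` X = {0}" using assms by auto
  moreover have "lattice_points \<inter> {0} = {0 :: real ^ 'n}" using lattice_points_zero by blast
  ultimately show ?thesis by (simp add: lattice_count_def)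
qed

context
  fixes V :: "(real ^ 'n::finite) set"
  assumes finV: "finite V" and neV: "V \<noteq> {}" and indepV: "\<not> affine_dependent V"
    and latV: "V \<subseteq> lattice_points"
begin

(* Barycentric description of the lattice points of s conv V: weight functions on V
   of total mass s whose barycentric combination is a lattice point. *)
definition lattice_weights :: "nat \<Rightarrow> ((real ^ 'n) \<Rightarrow> real) set" where
  "lattice_weights s = {\<mu>. \<mu> \<in> extensional V \<and> (\<forall>v\<in>V. 0 \<le> \<mu> v) \<and> sum \<mu> V = real s
      \<and> (\<Sum>v\<in>V. \<mu> v *\<^sub>R v) \<in> lattice_points}"

(* Barycentric coordinates are unique, by affine independence ... *)
lemma lattice_weights_inj: "inj_on (\<lambda>\<mu>. \<Sum>v\<in>V. \<mu> v *\<^sub>R v) (lattice_weights s)"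
proof (rule inj_onI)
  fix \<mu> \<nu> assume \<mu>: "\<mu> \<in> lattice_weights s" and \<nu>: "\<nu> \<in> lattice_weights s"
    and eq: "(\<Sum>v\<in>V. \<mu> v *\<^sub>R v) = (\<Sum>v\<in>V. \<nu> v *\<^sub>R v)"
  have "(\<Sum>v\<in>V. \<mu> v - \<nu> v) = 0"
    using \<mu> \<nu> by (simp add: lattice_weights_def sum_subtractf)
  moreover have "(\<Sum>v\<in>V. (\<mu> v - \<nu> v) *\<^sub>R v) = 0"
    using eq by (simp add: scaleR_diff_left sum_subtractf)
  ultimately have "\<forall>v\<in>V. \<mu> v - \<nu> v = 0"
    using indepV affine_dependent_explicit_finite[OF finV] by blast
  then show "\<mu> = \<nu>"
    using \<mu> \<nu> by (intro extensionalityI[of _ V]) (auto simp: lattice_weights_def)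
qed

lemma lattice_weights_image:
  "(\<lambda>\<mu>. \<Sum>v\<in>V. \<mu> v *\<^sub>R v) ` lattice_weights s = lattice_points \<inter> (\<lambda>x. real s *\<^sub>R x) ` (convex hull V)"
proof (intro equalityI subsetI)
  fix y assume "y \<in> (\<lambda>\<mu>. \<Sum>v\<in>V. \<mu> v *\<^sub>R v) ` lattice_weights s"
  then obtain \<mu> where \<mu>: "\<mu> \<in> lattice_weights s" and y: "y = (\<Sum>v\<in>V. \<mu> v *\<^sub>R v)" by blast
  have "y \<in> (\<lambda>x. real s *\<^sub>R x) ` (convex hull V)"
  proof (cases "s = 0")
    case True
    then have "\<forall>v\<in>V. \<mu> v = 0"
      using \<mu> finV sum_nonneg_eq_0_iff[of V \<mu>] by (auto simp: lattice_weights_def)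
    moreover obtain x where "x \<in> convex hull V" using neV hull_inc by fastforce
    ultimately show ?thesis using True y by (intro image_eqI[of _ _ x]) auto
  next
    case False
    define u where "u v = \<mu> v / real s" for v
    have "(\<forall>v\<in>V. 0 \<le> u v) \<and> sum u V = 1"
      using \<mu> False by (auto simp: lattice_weights_def u_def simp flip: sum_divide_distrib)
    then have "(\<Sum>v\<in>V. u v *\<^sub>R v) \<in> convex hull V"
      unfolding convex_hull_finite[OF finV] by blast
    moreover have "y = real s *\<^sub>R (\<Sum>v\<in>V. u v *\<^sub>R v)"
      using False by (simp add: y u_def scaleR_sum_right)
    ultimately show ?thesis by blast
  qed
  then show "y \<in> lattice_points \<inter> (\<lambda>x. real s *\<^sub>R x) ` (convex hull V)"
    using \<mu> y by (simp add: lattice_weights_def)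
next
  fix y assume y: "y \<in> lattice_points \<inter> (\<lambda>x. real s *\<^sub>R x) ` (convex hull V)"
  then obtain x where x: "x \<in> convex hull V" and yx: "y = real s *\<^sub>R x" by blast
  obtain u where u: "\<forall>v\<in>V. 0 \<le> u v" "sum u V = 1" "(\<Sum>v\<in>V. u v *\<^sub>R v) = x"
    using x unfolding convex_hull_finite[OF finV] by blast
  define \<mu> where "\<mu> = restrict (\<lambda>v. real s * u v) V"
  have "(\<Sum>v\<in>V. \<mu> v *\<^sub>R v) = real s *\<^sub>R (\<Sum>v\<in>V. u v *\<^sub>R v)"
    by (simp add: \<mu>_def scaleR_sum_right)
  then have \<mu>y: "(\<Sum>v\<in>V. \<mu> v *\<^sub>R v) = y" using u yx by simp
  have "\<mu> \<in> lattice_weights s"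
    using u y \<mu>y by (simp add: lattice_weights_def \<mu>_def flip: sum_distrib_left)
  then show "y \<in> (\<lambda>\<mu>. \<Sum>v\<in>V. \<mu> v *\<^sub>R v) ` lattice_weights s" using \<mu>y by force
qed

lemma lattice_count_simplex: "lattice_count (convex hull V) s = int (card (lattice_weights s))"
  using card_image[OF lattice_weights_inj[of s]] lattice_weights_image[of s]
  by (simp add: lattice_count_def)

lemma finite_lattice_weights: "finite (lattice_weights s)"
proof -
  have "bounded ((\<lambda>x. real s *\<^sub>R x) ` (convex hull V))"
    using finV by (simp add: bounded_scaling compact_imp_bounded finite_imp_compact_convex_hull)
  then have "finite ((\<lambda>\<mu>. \<Sum>v\<in>V. \<mu> v *\<^sub>R v) ` lattice_weights s)"
    unfolding lattice_weights_image by (rule finite_lattice_points_bounded)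
  then show ?thesis using lattice_weights_inj finite_image_iff by blast
qed

definition capped_weights :: "(real ^ 'n) set \<Rightarrow> nat \<Rightarrow> ((real ^ 'n) \<Rightarrow> real) set" where
  "capped_weights W s = {\<mu> \<in> lattice_weights s. \<forall>w\<in>W. \<mu> w < 1}"

definition capped_count :: "(real ^ 'n) set \<Rightarrow> nat \<Rightarrow> int" where
  "capped_count W s = int (card (capped_weights W s))"

lemma capped_count_split:
  "capped_count W s = capped_count (insert v W) s + int (card {\<mu> \<in> capped_weights W s. 1 \<le> \<mu> v})"
proof -
  have "capped_weights W s = capped_weights (insert v W) s \<union> {\<mu> \<in> capped_weights W s. 1 \<le> \<mu> v}"
    "capped_weights (insert v W) s \<inter> {\<mu> \<in> capped_weights W s. 1 \<le> \<mu> v} = {}"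
    by (auto simp: capped_weights_def)
  moreover have "finite (capped_weights W' s)" for W'
    using finite_lattice_weights[of s] by (simp add: capped_weights_def)
  ultimately have "card (capped_weights W s)
      = card (capped_weights (insert v W) s) + card {\<mu> \<in> capped_weights W s. 1 \<le> \<mu> v}"
    by (metis (no_types, lifting) card_Un_disjoint finite_Un)
  then show ?thesis by (simp add: capped_count_def)
qed

lemma capped_weights_zero:
  assumes "v \<in> V"
  shows "{\<mu> \<in> capped_weights W 0. 1 \<le> \<mu> v} = {}"
proof -
  have "\<mu> v = 0" if "\<mu> \<in> lattice_weights 0" for \<mu>
    using that finV assms sum_nonneg_eq_0_iff[of V \<mu>] by (auto simp: lattice_weights_def)
  then show ?thesis by (fastforce simp: capped_weights_def)
qed

(* Subtracting the unit weight at v, a lattice vector, is a bijection from weights of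
   mass s + 1 with \<mu> v \<ge> 1 onto weights of mass s; here the lattice vertices are needed. *)
lemma capped_weights_shift:
  assumes v: "v \<in> V" "v \<notin> W" and WV: "W \<subseteq> V"
  shows "card {\<mu> \<in> capped_weights W (Suc s). 1 \<le> \<mu> v} = card (capped_weights W s)"
proof -
  define e where "e x = (if x = v then 1 else (0::real))" for x
  define sub where "sub \<mu> = restrict (\<lambda>x. \<mu> x - e x) V" for \<mu> :: "real^'n \<Rightarrow> real"
  define add where "add \<mu> = restrict (\<lambda>x. \<mu> x + e x) V" for \<mu> :: "real^'n \<Rightarrow> real"
  have sum_e: "sum e V = 1" using v finV by (simp add: e_def)
  have "(\<Sum>x\<in>V. e x *\<^sub>R x) = (\<Sum>x\<in>V. if x = v then x else 0)"
    by (rule sum.cong) (auto simp: e_def)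
  then have comb_e: "(\<Sum>x\<in>V. e x *\<^sub>R x) = v" using v finV by simp
  have vl: "v \<in> lattice_points" using v latV by auto
  show ?thesis
  proof (rule bij_betw_same_card[of sub], rule bij_betw_byWitness[of _ add])
    show "\<forall>\<mu>\<in>{\<mu> \<in> capped_weights W (Suc s). 1 \<le> \<mu> v}. add (sub \<mu>) = \<mu>"
      by (auto simp: capped_weights_def lattice_weights_def sub_def add_def intro!: extensionalityI[of _ V])
    show "\<forall>\<mu>\<in>capped_weights W s. sub (add \<mu>) = \<mu>"
      by (auto simp: capped_weights_def lattice_weights_def sub_def add_def intro!: extensionalityI[of _ V])
    show "sub ` {\<mu> \<in> capped_weights W (Suc s). 1 \<le> \<mu> v} \<subseteq> capped_weights W s"
    proof clarify
      fix \<mu> assume \<mu>: "\<mu> \<in> capped_weights W (Suc s)" "1 \<le> \<mu> v"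
      have "(\<Sum>x\<in>V. sub \<mu> x *\<^sub>R x) = (\<Sum>x\<in>V. \<mu> x *\<^sub>R x) - v"
        using comb_e by (simp add: sub_def scaleR_diff_left sum_subtractf)
      moreover have "sum (sub \<mu>) V = sum \<mu> V - 1" using sum_e by (simp add: sub_def sum_subtractf)
      ultimately show "sub \<mu> \<in> capped_weights W s" using \<mu> v vl WV
        by (auto simp: capped_weights_def lattice_weights_def sub_def e_def lattice_points_diff)
    qed
    show "add ` capped_weights W s \<subseteq> {\<mu> \<in> capped_weights W (Suc s). 1 \<le> \<mu> v}"
    proof clarify
      fix \<mu> assume \<mu>: "\<mu> \<in> capped_weights W s"
      have "(\<Sum>x\<in>V. add \<mu> x *\<^sub>R x) = (\<Sum>x\<in>V. \<mu> x *\<^sub>R x) + v"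
        using comb_e by (simp add: add_def scaleR_add_left sum.distrib)
      moreover have "sum (add \<mu>) V = sum \<mu> V + 1" using sum_e by (simp add: add_def sum.distrib)
      ultimately show "add \<mu> \<in> capped_weights W (Suc s) \<and> 1 \<le> add \<mu> v" using \<mu> v vl WV
        by (auto simp: capped_weights_def lattice_weights_def add_def e_def lattice_points_add)
    qed
  qed
qed

lemma capped_count_insert:
  assumes "v \<in> V" "v \<notin> W" "W \<subseteq> V"
  shows "capped_count (insert v W) = bwd_diff (capped_count W)"
proof
  fix s show "capped_count (insert v W) s = bwd_diff (capped_count W) s"
  proof (cases s)
    case 0
    then show ?thesis
      using capped_count_split[of W s v] capped_weights_zero[OF assms(1)] by (simp add: bwd_diff_def)
  next
    case (Suc r)
    then show ?thesis
      using capped_count_split[of W s v] capped_weights_shift[OF assms, of r]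
      by (simp add: bwd_diff_def capped_count_def)
  qed
qed

lemma capped_count_iter: "W \<subseteq> V \<Longrightarrow> capped_count W = (bwd_diff ^^ card W) (capped_count {})"
proof (induction W rule: infinite_finite_induct)
  case (infinite W)
  then show ?case using finV finite_subset by blast
next
  case (insert v W)
  then have "capped_count (insert v W) = bwd_diff (capped_count W)"
    by (intro capped_count_insert) auto
  then show ?case using insert by simp
qed simp

lemma capped_count_all: "card V \<le> s \<Longrightarrow> capped_count V s = 0"
proof -
  assume s: "card V \<le> s"
  have "capped_weights V s = {}"
  proof (rule ccontr)
    assume "capped_weights V s \<noteq> {}"
    then obtain \<mu> where \<mu>: "\<mu> \<in> lattice_weights s" "\<forall>w\<in>V. \<mu> w < 1"
      by (auto simp: capped_weights_def)
    then have "sum \<mu> V < sum (\<lambda>_. 1) V" using finV neV by (intro sum_strict_mono) auto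
    then show False using \<mu> s by (simp add: lattice_weights_def)
  qed
  then show ?thesis by (simp add: capped_count_def)
qed

lemma simplex_diff_vanishes: "diff_vanishes (card V) (lattice_count (convex hull V))"
proof -
  have count: "lattice_count (convex hull V) = capped_count {}"
    by (auto simp: lattice_count_simplex capped_count_def capped_weights_def)
  have "(fwd_diff ^^ card V) (lattice_count (convex hull V)) t = 0" for t
  proof -
    have "(fwd_diff ^^ card V) (lattice_count (convex hull V)) t
        = (bwd_diff ^^ card V) (capped_count {}) (t + card V)"
      by (simp only: count bwd_diff_iter_shift)
    also have "\<dots> = capped_count V (t + card V)"
      by (simp only: capped_count_iter[OF order_refl])
    finally show ?thesis by (simp add: capped_count_all)
  qed
  then show ?thesis by (simp add: diff_vanishes_def fun_eq_iff)
qed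

end

lemma scaleR_image_INT:
  fixes S :: "'i \<Rightarrow> 'a::real_vector set"
  assumes "c \<noteq> 0" "K \<noteq> {}"
  shows "(\<lambda>x. c *\<^sub>R x) ` (\<Inter>i\<in>K. S i) = (\<Inter>i\<in>K. (\<lambda>x. c *\<^sub>R x) ` S i)"
proof -
  have "inj (\<lambda>x::'a. c *\<^sub>R x)" using assms(1) by (simp add: inj_on_def)
  moreover obtain k where "k \<in> K" using assms(2) by blast
  ultimately show ?thesis using image_INT[of _ UNIV K S k] by simp
qed

(* Inclusion-exclusion for lattice point counts of dilates. Nonemptiness of all
   intersections is needed at t = 0, where every nonempty set collapses to {0}. *)
lemma lattice_count_incl_excl:
  fixes S :: "'i \<Rightarrow> (real ^ 'n::finite) set"
  assumes I: "finite I" and bounded: "\<And>i. i \<in> I \<Longrightarrow> bounded (S i)"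
    and meet: "\<And>K. K \<subseteq> I \<Longrightarrow> K \<noteq> {} \<Longrightarrow> (\<Inter>i\<in>K. S i) \<noteq> {}"
  shows "lattice_count (\<Union>i\<in>I. S i) t
    = (\<Sum>K | K \<subseteq> I \<and> K \<noteq> {}. (- 1) ^ (card K + 1) * lattice_count (\<Inter>i\<in>K. S i) t)"
proof -
  interpret Incl_Excl finite "int o card"
    by unfold_locales (auto simp add: card_Un_disjnt)
  define X where "X i = lattice_points \<inter> (\<lambda>x. real t *\<^sub>R x) ` S i" for i
  have "finite (X i)" if "i \<in> I" for i
    unfolding X_def using bounded[OF that] by (intro finite_lattice_points_bounded bounded_scaling)
  then have "int (card (\<Union>i\<in>I. X i))
      = (\<Sum>K | K \<subseteq> I \<and> K \<noteq> {}. (- 1) ^ (card K + 1) * int (card (\<Inter>i\<in>K. X i)))"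
    using restricted_indexed[OF I, of X] by simp
  moreover have "(\<Inter>i\<in>K. X i) = lattice_points \<inter> (\<lambda>x. real t *\<^sub>R x) ` (\<Inter>i\<in>K. S i)"
    if K: "K \<subseteq> I" "K \<noteq> {}" for K
  proof (cases "t = 0")
    case True
    have "S i \<noteq> {}" if "i \<in> K" for i using meet[of "{i}"] that K by auto
    then show ?thesis using meet[OF K] K True by (auto simp: X_def)
  next
    case False
    then show ?thesis using K by (simp add: X_def scaleR_image_INT)
  qed
  ultimately show ?thesis by (simp add: lattice_count_def X_def image_UN)
qed

lemma diff_vanishes_Union:
  fixes S :: "'i \<Rightarrow> (real ^ 'n::finite) set"
  assumes I: "finite I" and bounded: "\<And>i. i \<in> I \<Longrightarrow> bounded (S i)"
    and meet: "\<And>K. K \<subseteq> I \<Longrightarrow> K \<noteq> {} \<Longrightarrow> (\<Inter>i\<in>K. S i) \<noteq> {}"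
    and vanish: "\<And>K. K \<subseteq> I \<Longrightarrow> K \<noteq> {} \<Longrightarrow> diff_vanishes N (lattice_count (\<Inter>i\<in>K. S i))"
  shows "diff_vanishes N (lattice_count (\<Union>i\<in>I. S i))"
proof -
  have "diff_vanishes N
      (\<lambda>t. \<Sum>K | K \<subseteq> I \<and> K \<noteq> {}. (- 1) ^ (card K + 1) * lattice_count (\<Inter>i\<in>K. S i) t)"
    by (rule diff_vanishes_sum) (use vanish in auto)
  moreover have "lattice_count (\<Union>i\<in>I. S i)
      = (\<lambda>t. \<Sum>K | K \<subseteq> I \<and> K \<noteq> {}. (- 1) ^ (card K + 1) * lattice_count (\<Inter>i\<in>K. S i) t)"
    by (simp add: fun_eq_iff lattice_count_incl_excl[OF I bounded meet])
  ultimately show ?thesis by simp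
qed

lemma cone_point_on_segment:
  fixes a :: "'a::real_vector"
  assumes "convex W" "x \<in> convex hull (insert a W)" "x \<noteq> a"
  obtains y where "y \<in> W" "x \<in> closed_segment a y"
  using assms by (auto simp: convex_hull_insert_segments hull_same split: if_splits)

lemma cone_UN:
  fixes U :: "'i \<Rightarrow> 'a::real_vector set"
  assumes "I \<noteq> {}" "convex (\<Union>i\<in>I. U i)" "\<And>i. i \<in> I \<Longrightarrow> convex (U i)"
  shows "convex hull (insert a (\<Union>i\<in>I. U i)) = (\<Union>i\<in>I. convex hull (insert a (U i)))"
proof (intro equalityI subsetI)
  fix x assume x: "x \<in> convex hull (insert a (\<Union>i\<in>I. U i))"
  show "x \<in> (\<Union>i\<in>I. convex hull (insert a (U i)))"
  proof (cases "x = a")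
    case True
    then show ?thesis using assms(1) by (auto intro: hull_inc)
  next
    case False
    then obtain i y where "i \<in> I" "y \<in> U i" "x \<in> closed_segment a y"
      using cone_point_on_segment[OF assms(2) x] by blast
    moreover have "closed_segment a y \<subseteq> convex hull (insert a (U i))"
      unfolding segment_convex_hull using \<open>y \<in> U i\<close> by (intro hull_mono) auto
    ultimately show ?thesis by blast
  qed
next
  fix x assume "x \<in> (\<Union>i\<in>I. convex hull (insert a (U i)))"
  then obtain i where "i \<in> I" "x \<in> convex hull (insert a (U i))" by blast
  moreover have "convex hull (insert a (U i)) \<subseteq> convex hull (insert a (\<Union>i\<in>I. U i))" if "i \<in> I"
    using that by (intro hull_mono) auto
  ultimately show "x \<in> convex hull (insert a (\<Union>i\<in>I. U i))" by blast
qed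

lemma cone_INT:
  fixes W :: "'i \<Rightarrow> 'a::real_vector set"
  assumes J: "J \<noteq> {}" and convex: "\<And>j. j \<in> J \<Longrightarrow> convex (W j)"
    and unique: "\<And>i j y y' x. \<lbrakk>i \<in> J; j \<in> J; y \<in> W i; y' \<in> W j; x \<in> closed_segment a y;
                    x \<in> closed_segment a y'; x \<noteq> a\<rbrakk> \<Longrightarrow> y = y'"
  shows "(\<Inter>j\<in>J. convex hull (insert a (W j))) = convex hull (insert a (\<Inter>j\<in>J. W j))"
proof (intro equalityI subsetI)
  fix x assume x: "x \<in> (\<Inter>j\<in>J. convex hull (insert a (W j)))"
  show "x \<in> convex hull (insert a (\<Inter>j\<in>J. W j))"
  proof (cases "x = a")
    case True
    then show ?thesis by (simp add: hull_inc)
  next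
    case False
    obtain j0 where j0: "j0 \<in> J" using J by blast
    obtain y where y: "y \<in> W j0" "x \<in> closed_segment a y"
      using cone_point_on_segment[OF convex[OF j0] _ False] x j0 by blast
    have "y \<in> W j" if j: "j \<in> J" for j
    proof -
      obtain y' where "y' \<in> W j" "x \<in> closed_segment a y'"
        using cone_point_on_segment[OF convex[OF j] _ False] x j by blast
      then show ?thesis using unique[OF j0 j y(1)] y(2) False by metis
    qed
    then have "closed_segment a y \<subseteq> convex hull (insert a (\<Inter>j\<in>J. W j))"
      unfolding segment_convex_hull by (intro hull_mono) auto
    then show ?thesis using y(2) by blast
  qed
next
  fix x assume "x \<in> convex hull (insert a (\<Inter>j\<in>J. W j))"
  then show "x \<in> (\<Inter>j\<in>J. convex hull (insert a (W j)))"
    using hull_mono[of "insert a (\<Inter>j\<in>J. W j)"] by blast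
qed

lemma segment_from_outside_affine_unique:
  fixes a :: "'a::real_vector"
  assumes a: "a \<notin> affine hull Z" and y: "y \<in> Z" "y' \<in> Z"
    and x: "x \<in> closed_segment a y" "x \<in> closed_segment a y'" and xa: "x \<noteq> a"
  shows "y = y'"
proof -
  obtain s where s: "0 \<le> s" "s \<le> 1" "x = (1 - s) *\<^sub>R a + s *\<^sub>R y"
    using x(1) by (auto simp: in_segment)
  obtain s' where s': "0 \<le> s'" "s' \<le> 1" "x = (1 - s') *\<^sub>R a + s' *\<^sub>R y'"
    using x(2) by (auto simp: in_segment)
  have "s \<noteq> 0" using s xa by auto
  have eq: "s *\<^sub>R y - s' *\<^sub>R y' = (s - s') *\<^sub>R a"
    using s(3) s'(3) by (simp add: algebra_simps)
  show ?thesis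
  proof (cases "s = s'")
    case True
    then show ?thesis using eq \<open>s \<noteq> 0\<close> by simp
  next
    case False
    have "a = (1 / (s - s')) *\<^sub>R (s *\<^sub>R y - s' *\<^sub>R y')"
      using False by (simp add: eq)
    also have "\<dots> = (s / (s - s')) *\<^sub>R y + (- s' / (s - s')) *\<^sub>R y'"
      by (simp add: scaleR_diff_right)
    also have "\<dots> \<in> affine hull Z"
      using False y by (intro mem_affine[OF affine_affine_hull] hull_inc) (auto simp: divide_simps)
    finally show ?thesis using a by simp
  qed
qed

(* It is the device that lets the induction on dimension run: intersecting the cones from a
   vertex w of G produces a pyramid over a lower-dimensional face, with w as a new apex. *)
fun iter_pyramid :: "'a::euclidean_space list \<Rightarrow> 'a set \<Rightarrow> 'a set" where
  "iter_pyramid [] G = G"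
| "iter_pyramid (a # A) G = convex hull (insert a (iter_pyramid A G))"

fun apexes_independent :: "'a::euclidean_space list \<Rightarrow> 'a set \<Rightarrow> bool" where
  "apexes_independent [] G \<longleftrightarrow> True"
| "apexes_independent (a # A) G \<longleftrightarrow> apexes_independent A G \<and> a \<notin> affine hull (iter_pyramid A G)"

lemma iter_pyramid_append: "iter_pyramid (A @ B) G = iter_pyramid A (iter_pyramid B G)"
  by (induction A) auto

lemma apexes_independent_append:
  "apexes_independent (A @ B) G \<longleftrightarrow> apexes_independent B G \<and> apexes_independent A (iter_pyramid B G)"
  by (induction A) (auto simp: iter_pyramid_append)

lemma iter_pyramid_mono: "Y \<subseteq> G \<Longrightarrow> iter_pyramid A Y \<subseteq> iter_pyramid A G"
  by (induction A) (simp_all add: hull_mono[OF insert_mono])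

lemma convex_iter_pyramid: "convex G \<Longrightarrow> convex (iter_pyramid A G)"
  by (induction A) auto

lemma compact_iter_pyramid: "compact G \<Longrightarrow> compact (iter_pyramid A G)"
  by (induction A) (auto intro: compact_convex_hull)

lemma iter_pyramid_nonempty: "A \<noteq> [] \<Longrightarrow> iter_pyramid A G \<noteq> {}"
  by (cases A) auto

lemma apexes_independent_mono: "apexes_independent A G \<Longrightarrow> Y \<subseteq> G \<Longrightarrow> apexes_independent A Y"
proof (induction A)
  case (Cons a A)
  then have "affine hull (iter_pyramid A Y) \<subseteq> affine hull (iter_pyramid A G)"
    by (intro hull_mono iter_pyramid_mono)
  then show ?case using Cons by auto
qed simp

lemma iter_pyramid_simplex:
  assumes "\<not> affine_dependent B" "apexes_independent A (convex hull B)"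
  shows "iter_pyramid A (convex hull B) = convex hull (set A \<union> B) \<and> \<not> affine_dependent (set A \<union> B)"
  using assms(2)
proof (induction A)
  case (Cons a A)
  then have IH: "iter_pyramid A (convex hull B) = convex hull (set A \<union> B)" "\<not> affine_dependent (set A \<union> B)"
    and a: "a \<notin> affine hull (set A \<union> B)"
    by auto
  have "iter_pyramid (a # A) (convex hull B) = convex hull (insert a (convex hull (set A \<union> B)))"
    by (simp add: IH(1))
  also have "\<dots> = convex hull (set (a # A) \<union> B)"
    by (simp add: hull_insert[symmetric])
  finally show ?case using IH(2) a affine_independent_insert by auto
qed (use assms in simp)

lemma iter_pyramid_UN:
  assumes "I \<noteq> {}" "convex (\<Union>i\<in>I. Y i)" "\<And>i. i \<in> I \<Longrightarrow> convex (Y i)"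
  shows "iter_pyramid A (\<Union>i\<in>I. Y i) = (\<Union>i\<in>I. iter_pyramid A (Y i))"
proof (induction A)
  case (Cons a A)
  have "convex (\<Union>i\<in>I. iter_pyramid A (Y i))"
    using convex_iter_pyramid[OF assms(2), of A] by (simp only: Cons.IH)
  then have "convex hull (insert a (\<Union>i\<in>I. iter_pyramid A (Y i)))
      = (\<Union>i\<in>I. convex hull (insert a (iter_pyramid A (Y i))))"
    using assms(1,3) by (intro cone_UN) (auto intro: convex_iter_pyramid)
  then show ?case using Cons.IH by simp
qed simp

lemma iter_pyramid_INT:
  assumes J: "J \<noteq> {}" and indep: "apexes_independent A Z"
    and Y: "\<And>j. j \<in> J \<Longrightarrow> Y j \<subseteq> Z \<and> convex (Y j)"
  shows "(\<Inter>j\<in>J. iter_pyramid A (Y j)) = iter_pyramid A (\<Inter>j\<in>J. Y j)"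
  using indep
proof (induction A)
  case (Cons a A)
  have a: "a \<notin> affine hull (iter_pyramid A Z)" using Cons.prems by simp
  have sub: "iter_pyramid A (Y j) \<subseteq> iter_pyramid A Z" "convex (iter_pyramid A (Y j))" if "j \<in> J" for j
    using Y[OF that] by (simp_all add: iter_pyramid_mono convex_iter_pyramid)
  have "(\<Inter>j\<in>J. convex hull (insert a (iter_pyramid A (Y j))))
      = convex hull (insert a (\<Inter>j\<in>J. iter_pyramid A (Y j)))"
    using J sub segment_from_outside_affine_unique[OF a] by (intro cone_INT) blast+
  then show ?case using Cons by simp
qed simp

lemma halfspace_exit_eq:
  fixes c :: "'a::real_inner"
  assumes "c \<bullet> w < b" "c \<bullet> y1 = b" "c \<bullet> y2 \<le> b" "s1 *\<^sub>R (y1 - w) = s2 *\<^sub>R (y2 - w)"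
    and "0 < s2" "s2 \<le> s1"
  shows "y1 = y2"
proof -
  have "s1 * (c \<bullet> y1 - c \<bullet> w) = s2 * (c \<bullet> y2 - c \<bullet> w)"
    using arg_cong[OF assms(4), of "\<lambda>v. c \<bullet> v"] by (simp add: inner_diff_right)
  also have "\<dots> \<le> s2 * (b - c \<bullet> w)" using assms by (intro mult_left_mono) auto
  finally have "s1 \<le> s2" using assms(1,2) by (simp add: mult_le_cancel_right)
  then have "s1 = s2" using assms by simp
  then show ?thesis using assms(4,5) by simp
qed

lemma segment_exit_unique:
  fixes w :: "'a::real_inner"
  assumes G1: "G \<subseteq> {z. c1 \<bullet> z \<le> b1}" "c1 \<bullet> w < b1" "c1 \<bullet> y1 = b1"
      and G2: "G \<subseteq> {z. c2 \<bullet> z \<le> b2}" "c2 \<bullet> w < b2" "c2 \<bullet> y2 = b2"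
      and y: "y1 \<in> G" "y2 \<in> G"
      and x: "x \<in> closed_segment w y1" "x \<in> closed_segment w y2" "x \<noteq> w"
  shows "y1 = y2"
proof -
  obtain s1 where s1: "0 \<le> s1" "x = (1 - s1) *\<^sub>R w + s1 *\<^sub>R y1" using x(1) by (auto simp: in_segment)
  obtain s2 where s2: "0 \<le> s2" "x = (1 - s2) *\<^sub>R w + s2 *\<^sub>R y2" using x(2) by (auto simp: in_segment)
  have "s1 \<noteq> 0" "s2 \<noteq> 0" using s1 s2 x(3) by auto
  have eq: "s1 *\<^sub>R (y1 - w) = s2 *\<^sub>R (y2 - w)"
    using s1(2) s2(2) by (simp add: algebra_simps)
  show ?thesis
  proof (cases "s2 \<le> s1")
    case True
    show ?thesis
      by (rule halfspace_exit_eq[OF G1(2,3) _ eq]) (use G1(1) y(2) \<open>s2 \<noteq> 0\<close> s2 True in auto)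
  next
    case False
    have "y2 = y1"
      by (rule halfspace_exit_eq[OF G2(2,3) _ eq[symmetric]]) (use G2(1) y(1) \<open>s1 \<noteq> 0\<close> s1 False in auto)
    then show ?thesis by simp
  qed
qed

context
  fixes G :: "'a::euclidean_space set" and F :: "'a set set"
    and normal :: "'a set \<Rightarrow> 'a" and offset :: "'a set \<Rightarrow> real"
  assumes finF: "finite F" and G_eq: "G = affine hull G \<inter> \<Inter>F"
    and halfspace: "\<And>h. h \<in> F \<Longrightarrow> h = {z. normal h \<bullet> z \<le> offset h}"
    and bounded: "bounded G"
begin

lemma polyhedron_le: "z \<in> G \<Longrightarrow> h \<in> F \<Longrightarrow> normal h \<bullet> z \<le> offset h"
  using G_eq halfspace by blast

lemma ray_in_polyhedron:
  assumes "w \<in> G" "x \<in> G" "\<And>h. h \<in> F \<Longrightarrow> normal h \<bullet> (w + s *\<^sub>R (x - w)) \<le> offset h"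
  shows "w + s *\<^sub>R (x - w) \<in> G"
proof -
  have "(1 - s) *\<^sub>R w + s *\<^sub>R x \<in> affine hull G"
    by (rule mem_affine[OF affine_affine_hull]) (use assms hull_inc in auto)
  then have "w + s *\<^sub>R (x - w) \<in> affine hull G" by (simp add: algebra_simps)
  moreover have "w + s *\<^sub>R (x - w) \<in> \<Inter>F" using assms(3) halfspace by blast
  ultimately show ?thesis using G_eq by blast
qed

(* By boundedness, the ray from w through x eventually violates some inequality. *)
lemma ray_leaves_polyhedron:
  assumes w: "w \<in> G" and x: "x \<in> G" "x \<noteq> w"
  shows "\<exists>h\<in>F. normal h \<bullet> (x - w) > 0"
proof (rule ccontr)
  assume "\<not> ?thesis"
  then have down: "normal h \<bullet> (x - w) \<le> 0" if "h \<in> F" for h using that by force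
  obtain B where B: "\<And>z. z \<in> G \<Longrightarrow> norm z \<le> B" using bounded bounded_iff by blast
  define s where "s = (B + norm w + 1) / norm (x - w)"
  have "B \<ge> 0" using B[OF w] norm_ge_zero order_trans by blast
  then have s: "s \<ge> 0" "norm (s *\<^sub>R (x - w)) = B + norm w + 1"
    using x(2) by (auto simp: s_def)
  have "w + s *\<^sub>R (x - w) \<in> G"
  proof (rule ray_in_polyhedron[OF w x(1)])
    fix h assume h: "h \<in> F"
    have "s * (normal h \<bullet> (x - w)) \<le> 0" using down[OF h] s by (simp add: mult_nonneg_nonpos)
    then show "normal h \<bullet> (w + s *\<^sub>R (x - w)) \<le> offset h"
      using polyhedron_le[OF w h] by (simp add: inner_add_right)
  qed
  then have "norm (w + s *\<^sub>R (x - w)) \<le> B" by (rule B)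
  moreover have "norm (s *\<^sub>R (x - w)) \<le> norm (w + s *\<^sub>R (x - w)) + norm w"
    using norm_triangle_ineq4[of "w + s *\<^sub>R (x - w)" w] by simp
  ultimately show False using s(2) by linarith
qed

lemma ray_exit_point:
  assumes w: "w \<in> G" and x: "x \<in> G" "x \<noteq> w"
  obtains h s where "h \<in> F" "normal h \<bullet> w < offset h" "1 \<le> s"
    "w + s *\<^sub>R (x - w) \<in> G" "normal h \<bullet> (w + s *\<^sub>R (x - w)) = offset h"
proof -
  define d where "d = x - w"
  define Hp where "Hp = {h \<in> F. normal h \<bullet> d > 0}"
  define r where "r h = (offset h - normal h \<bullet> w) / (normal h \<bullet> d)" for h
  define s where "s = Min (r ` Hp)"
  have finHp: "finite Hp" using finF by (simp add: Hp_def)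
  have "Hp \<noteq> {}" using ray_leaves_polyhedron[OF w x] by (auto simp: Hp_def d_def)
  then have "s \<in> r ` Hp" unfolding s_def using finHp by (intro Min_in) auto
  then obtain h where h: "h \<in> Hp" "r h = s" by blast
  have s_le: "s \<le> r h'" if "h' \<in> Hp" for h' unfolding s_def using finHp that by (intro Min_le) auto
  have r_ge: "1 \<le> r h'" if "h' \<in> Hp" for h'
  proof -
    have "normal h' \<bullet> x \<le> offset h'" using polyhedron_le[OF x(1)] that by (simp add: Hp_def)
    then show ?thesis using that by (simp add: Hp_def r_def d_def inner_diff_right)
  qed
  have pos: "normal h \<bullet> d > 0" "h \<in> F" using h by (auto simp: Hp_def)
  have "1 \<le> s" using r_ge[OF h(1)] h(2) by simp
  moreover have "normal h \<bullet> w < offset h"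
    using r_ge[OF h(1)] pos by (simp add: r_def le_divide_eq)
  moreover have "normal h \<bullet> (w + s *\<^sub>R d) = offset h"
    using pos h(2)[symmetric] by (simp add: inner_add_right r_def)
  moreover have "w + s *\<^sub>R d \<in> G" unfolding d_def
  proof (rule ray_in_polyhedron[OF w x(1)])
    fix h' assume h': "h' \<in> F"
    show "normal h' \<bullet> (w + s *\<^sub>R (x - w)) \<le> offset h'"
    proof (cases "h' \<in> Hp")
      case True
      then have "s * (normal h' \<bullet> d) \<le> r h' * (normal h' \<bullet> d)"
        using s_le by (simp add: Hp_def mult_right_mono)
      then show ?thesis using True by (simp add: Hp_def r_def inner_add_right d_def)
    next
      case False
      then have "s * (normal h' \<bullet> d) \<le> 0"
        using h' \<open>1 \<le> s\<close> by (simp add: Hp_def mult_nonneg_nonpos)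
      then show ?thesis using polyhedron_le[OF w h'] by (simp add: inner_add_right d_def)
    qed
  qed
  ultimately show ?thesis using that pos(2) by (simp add: d_def)
qed

lemma convex_polyhedron: "convex G"
proof -
  have "convex (\<Inter>F)" using halfspace by (intro convex_Inter) (metis convex_halfspace_le)
  then show ?thesis by (subst G_eq) (intro convex_Int convex_affine_hull)
qed

lemma cone_over_exit_facet:
  assumes w: "w \<in> G" and x: "x \<in> G" "x \<noteq> w"
  obtains h where "h \<in> F" "normal h \<bullet> w < offset h"
    "x \<in> convex hull (insert w (G \<inter> {z. normal h \<bullet> z = offset h}))"
proof -
  obtain h s where h: "h \<in> F" "normal h \<bullet> w < offset h" "1 \<le> s"
    "w + s *\<^sub>R (x - w) \<in> G" "normal h \<bullet> (w + s *\<^sub>R (x - w)) = offset h"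
    using ray_exit_point[OF w x] by blast
  define y where "y = w + s *\<^sub>R (x - w)"
  have "x = (1 - 1 / s) *\<^sub>R w + (1 / s) *\<^sub>R y" "0 \<le> 1 / s" "1 / s \<le> 1"
    using h(3) by (auto simp: y_def algebra_simps)
  then have "x \<in> closed_segment w y" unfolding in_segment(1) by blast
  moreover have "closed_segment w y \<subseteq> convex hull (insert w (G \<inter> {z. normal h \<bullet> z = offset h}))"
    unfolding segment_convex_hull using h(4,5) by (intro hull_mono) (auto simp: y_def)
  ultimately show ?thesis using that h(1,2) by blast
qed

lemma facet_cones_cover:
  assumes w: "w \<in> G" and x: "x \<in> G" "x \<noteq> w"
  shows "G = (\<Union>h\<in>{h \<in> F. normal h \<bullet> w < offset h}.
               convex hull (insert w (G \<inter> {z. normal h \<bullet> z = offset h})))"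
proof (intro equalityI subsetI)
  fix y assume y: "y \<in> G"
  show "y \<in> (\<Union>h\<in>{h \<in> F. normal h \<bullet> w < offset h}. convex hull (insert w (G \<inter> {z. normal h \<bullet> z = offset h})))"
  proof (cases "y = w")
    case True
    obtain h where "h \<in> F" "normal h \<bullet> w < offset h" using cone_over_exit_facet[OF w x] by blast
    then show ?thesis using True by (auto intro: hull_inc)
  next
    case False
    then show ?thesis using cone_over_exit_facet[OF w y] by blast
  qed
next
  fix y assume "y \<in> (\<Union>h\<in>{h \<in> F. normal h \<bullet> w < offset h}. convex hull (insert w (G \<inter> {z. normal h \<bullet> z = offset h})))"
  moreover have "convex hull (insert w (G \<inter> H)) \<subseteq> G" for H
    using w convex_polyhedron by (intro hull_minimal) auto
  ultimately show "y \<in> G" by blast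
qed

lemma facet_cones_INT:
  assumes w: "w \<in> G" and J: "J \<subseteq> {h \<in> F. normal h \<bullet> w < offset h}" "J \<noteq> {}"
  shows "(\<Inter>h\<in>J. convex hull (insert w (G \<inter> {z. normal h \<bullet> z = offset h})))
       = convex hull (insert w (\<Inter>h\<in>J. G \<inter> {z. normal h \<bullet> z = offset h}))"
proof (rule cone_INT[OF J(2)])
  fix h assume "h \<in> J"
  show "convex (G \<inter> {z. normal h \<bullet> z = offset h})"
    using convex_polyhedron by (simp add: convex_Int convex_hyperplane)
next
  fix i j y y' x
  assume "i \<in> J" "j \<in> J" "y \<in> G \<inter> {z. normal i \<bullet> z = offset i}" "y' \<in> G \<inter> {z. normal j \<bullet> z = offset j}"
    "x \<in> closed_segment w y" "x \<in> closed_segment w y'" "x \<noteq> w"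
  moreover have "G \<subseteq> {z. normal h \<bullet> z \<le> offset h}" if "h \<in> J" for h
    using that J(1) polyhedron_le by blast
  ultimately show "y = y'" using J(1) by (intro segment_exit_unique[of G "normal i" "offset i" w y "normal j" "offset j" y' x]) auto
qed

end

lemma polytope_vertex_cones:
  fixes G :: "'a::euclidean_space set"
  assumes P: "polytope G" and w: "w \<in> G" and x: "x \<in> G" "x \<noteq> w"
  obtains H :: "'a set set" and C where "finite H" "H \<noteq> {}"
    "\<And>h. h \<in> H \<Longrightarrow> C h face_of G \<and> C h \<noteq> G \<and> w \<notin> affine hull (C h)"
    "G = (\<Union>h\<in>H. convex hull (insert w (C h)))"
    "\<And>J. J \<subseteq> H \<Longrightarrow> J \<noteq> {} \<Longrightarrow> (\<Inter>h\<in>J. convex hull (insert w (C h))) = convex hull (insert w (\<Inter>h\<in>J. C h))"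
proof -
  obtain F where F: "finite F" "G = affine hull G \<inter> \<Inter>F" "\<forall>h\<in>F. \<exists>a b. a \<noteq> 0 \<and> h = {x. a \<bullet> x \<le> b}"
    using P polytope_imp_polyhedron polyhedron_Int_affine by metis
  obtain normal offset where halfspace: "\<And>h. h \<in> F \<Longrightarrow> h = {z. normal h \<bullet> z \<le> offset h}"
    using F(3) by metis
  have bG: "bounded G" using P polytope_imp_compact compact_imp_bounded by blast
  define H where "H = {h \<in> F. normal h \<bullet> w < offset h}"
  define C where "C h = G \<inter> {z. normal h \<bullet> z = offset h}" for h
  note polyhedron = F(1,2) halfspace bG
  show ?thesis
  proof
    show "finite H" using F(1) by (simp add: H_def)
    show "H \<noteq> {}" using cone_over_exit_facet[OF polyhedron w x] by (auto simp: H_def)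
    show "G = (\<Union>h\<in>H. convex hull (insert w (C h)))"
      unfolding H_def C_def by (rule facet_cones_cover[OF polyhedron w x])
    show "(\<Inter>h\<in>J. convex hull (insert w (C h))) = convex hull (insert w (\<Inter>h\<in>J. C h))"
      if "J \<subseteq> H" "J \<noteq> {}" for J
      unfolding C_def using facet_cones_INT[OF polyhedron w] that by (simp add: H_def)
  next
    fix h assume h: "h \<in> H"
    then have sup: "G \<subseteq> {z. normal h \<bullet> z \<le> offset h}" and off: "normal h \<bullet> w < offset h"
      using polyhedron_le[OF polyhedron] by (auto simp: H_def)
    have "C h face_of G"
      unfolding C_def using sup convex_polyhedron[OF polyhedron]
      by (intro face_of_Int_supporting_hyperplane_le) auto
    moreover have "w \<notin> C h" using off by (simp add: C_def)
    then have "C h \<noteq> G" using w by blast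
    moreover have "affine hull (C h) \<subseteq> {z. normal h \<bullet> z = offset h}"
      by (rule hull_minimal) (auto simp: C_def affine_hyperplane)
    ultimately show "C h face_of G \<and> C h \<noteq> G \<and> w \<notin> affine hull (C h)" using off by auto
  qed
qed

definition lattice_polytope :: "(real ^ 'n::finite) set \<Rightarrow> bool" where
  "lattice_polytope G \<longleftrightarrow> polytope G \<and> (\<forall>v. v extreme_point_of G \<longrightarrow> v \<in> lattice_points)"

lemma lattice_polytope_face:
  assumes "lattice_polytope G" "F face_of G"
  shows "lattice_polytope F"
proof -
  have "polytope F"
    using assms face_of_polytope_polytope by (auto simp: lattice_polytope_def)
  moreover have "v \<in> lattice_points" if "v extreme_point_of F" for v
    using that extreme_point_of_face[OF assms(2)] assms(1) by (auto simp: lattice_polytope_def)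
  ultimately show ?thesis by (simp add: lattice_polytope_def)
qed

(* A lattice simplex in R^d has at most d + 1 vertices, so its count is annihilated by
   the (d + 1)-st difference. *)
lemma lattice_simplex_diff_vanishes:
  fixes V :: "(real ^ 'n::finite) set"
  assumes "finite V" "V \<noteq> {}" "\<not> affine_dependent V" "V \<subseteq> lattice_points"
  shows "diff_vanishes (Suc CARD('n)) (lattice_count (convex hull V))"
proof (rule diff_vanishes_mono[OF simplex_diff_vanishes[OF assms]])
  show "card V \<le> Suc CARD('n)"
    using affine_dependent_biggerset[OF assms(1)] assms(3) by fastforce
qed

(* Base case of the induction: over a point or the empty set an iterated pyramid is a
   lattice simplex. *)
lemma iter_pyramid_point_diff_vanishes:
  fixes G :: "(real ^ 'n::finite) set"
  assumes G: "lattice_polytope G" "aff_dim G \<le> 0"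
    and A: "set A \<subseteq> lattice_points" "apexes_independent A G" "iter_pyramid A G \<noteq> {}"
  shows "diff_vanishes (Suc CARD('n)) (lattice_count (iter_pyramid A G))"
proof -
  obtain B where B: "G = convex hull B" "finite B" "\<not> affine_dependent B" "B \<subseteq> lattice_points"
  proof (cases "G = {}")
    case True
    then show ?thesis using that[of "{}"] by simp
  next
    case False
    then have "aff_dim G \<noteq> -1" by (simp add: aff_dim_empty)
    then have "aff_dim G = 0" using G(2) aff_dim_geq[of G] by linarith
    then obtain g where g: "G = {g}" using aff_dim_eq_0 by blast
    then have "g \<in> lattice_points" using G(1) by (simp add: lattice_polytope_def)
    then show ?thesis using that[of "{g}"] g by simp
  qed
  have V: "iter_pyramid A G = convex hull (set A \<union> B)" "\<not> affine_dependent (set A \<union> B)"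
    using iter_pyramid_simplex[OF B(3), of A] A(2) unfolding B(1) by auto
  have "set A \<union> B \<noteq> {}" using A(3) V(1) by auto
  then show ?thesis unfolding V(1)
    by (rule lattice_simplex_diff_vanishes[rotated]) (use V(2) A(1) B(2,4) in auto)
qed

lemma face_intersection_lower_dim:
  fixes G :: "(real ^ 'n::finite) set"
  assumes G: "lattice_polytope G" and J: "J \<noteq> {}"
    and C: "\<And>h. h \<in> J \<Longrightarrow> C h face_of G \<and> C h \<noteq> G \<and> w \<notin> affine hull (C h)"
    and cones: "\<And>h. h \<in> J \<Longrightarrow> convex hull (insert w (C h)) \<subseteq> G"
    and indep: "apexes_independent A G"
  shows "lattice_polytope (\<Inter>h\<in>J. C h) \<and> aff_dim (\<Inter>h\<in>J. C h) < aff_dim G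
    \<and> apexes_independent (A @ [w]) (\<Inter>h\<in>J. C h)"
proof -
  obtain h0 where h0: "h0 \<in> J" using J by blast
  have "(\<Inter>h\<in>J. C h) face_of G" using J C by (intro face_of_Inter) auto
  then have "lattice_polytope (\<Inter>h\<in>J. C h)" by (rule lattice_polytope_face[OF G])
  moreover have "aff_dim (\<Inter>h\<in>J. C h) \<le> aff_dim (C h0)" using h0 by (intro aff_dim_subset) auto
  moreover have "aff_dim (C h0) < aff_dim G"
    using C[OF h0] G face_of_aff_dim_lt polytope_imp_convex by (auto simp: lattice_polytope_def)
  moreover have "affine hull (\<Inter>h\<in>J. C h) \<subseteq> affine hull (C h0)" using h0 by (intro hull_mono) auto
  then have "w \<notin> affine hull (\<Inter>h\<in>J. C h)" using C[OF h0] by blast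
  moreover have "convex hull (insert w (\<Inter>h\<in>J. C h)) \<subseteq> convex hull (insert w (C h0))"
    using h0 by (intro hull_mono) auto
  then have "convex hull (insert w (\<Inter>h\<in>J. C h)) \<subseteq> G" using cones[OF h0] by blast
  ultimately show ?thesis
    using apexes_independent_mono[OF indep] by (simp add: apexes_independent_append)
qed

lemma lattice_polytope_vertex_cones:
  fixes G :: "(real ^ 'n::finite) set"
  assumes G: "lattice_polytope G" and dim: "0 < aff_dim G"
  obtains w and H :: "(real ^ 'n) set set" and C where "w \<in> lattice_points" "finite H" "H \<noteq> {}"
    "\<And>h. h \<in> H \<Longrightarrow> C h face_of G \<and> C h \<noteq> G \<and> w \<notin> affine hull (C h)"
    "G = (\<Union>h\<in>H. convex hull (insert w (C h)))"
    "\<And>J. J \<subseteq> H \<Longrightarrow> J \<noteq> {} \<Longrightarrow> (\<Inter>h\<in>J. convex hull (insert w (C h))) = convex hull (insert w (\<Inter>h\<in>J. C h))"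
proof -
  have P: "polytope G" and cG: "convex G" "compact G"
    using G by (auto simp: lattice_polytope_def polytope_imp_convex polytope_imp_compact)
  have "G \<noteq> {}" using dim by auto
  then obtain w where "w extreme_point_of G"
    using Krein_Milman_Minkowski[OF cG(2,1)] by fastforce
  then have wG: "w \<in> G" and wl: "w \<in> lattice_points"
    using G by (auto simp: extreme_point_of_def lattice_polytope_def)
  obtain x where x: "x \<in> G" "x \<noteq> w"
  proof (rule ccontr)
    assume "\<not> thesis"
    with that have "G \<subseteq> {w}" by blast
    then have "aff_dim G \<le> aff_dim {w}" by (rule aff_dim_subset)
    then show False using dim by simp
  qed
  show ?thesis by (rule polytope_vertex_cones[OF P wG x]) (rule that[OF wl])
qed

lemma iter_pyramid_cone_cover:
  fixes G :: "'a::euclidean_space set"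
  assumes cG: "convex G" and H: "H \<noteq> {}" and C: "\<And>h. h \<in> H \<Longrightarrow> convex (C h)"
    and cover: "G = (\<Union>h\<in>H. convex hull (insert w (C h)))"
    and meet: "\<And>J. J \<subseteq> H \<Longrightarrow> J \<noteq> {} \<Longrightarrow>
        (\<Inter>h\<in>J. convex hull (insert w (C h))) = convex hull (insert w (\<Inter>h\<in>J. C h))"
    and indep: "apexes_independent A G"
  shows "iter_pyramid A G = (\<Union>h\<in>H. iter_pyramid A (convex hull (insert w (C h))))"
    and "J \<subseteq> H \<Longrightarrow> J \<noteq> {} \<Longrightarrow>
        (\<Inter>h\<in>J. iter_pyramid A (convex hull (insert w (C h)))) = iter_pyramid (A @ [w]) (\<Inter>h\<in>J. C h)"
proof -
  have "iter_pyramid A G = iter_pyramid A (\<Union>h\<in>H. convex hull (insert w (C h)))"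
    using cover by simp
  also have "\<dots> = (\<Union>h\<in>H. iter_pyramid A (convex hull (insert w (C h))))"
    by (rule iter_pyramid_UN) (use H cover cG in auto)
  finally show "iter_pyramid A G = (\<Union>h\<in>H. iter_pyramid A (convex hull (insert w (C h))))" .
next
  assume J: "J \<subseteq> H" "J \<noteq> {}"
  have "(\<Inter>h\<in>J. iter_pyramid A (convex hull (insert w (C h))))
      = iter_pyramid A (\<Inter>h\<in>J. convex hull (insert w (C h)))"
    by (rule iter_pyramid_INT[OF J(2) indep]) (use J(1) cover in auto)
  then show "(\<Inter>h\<in>J. iter_pyramid A (convex hull (insert w (C h)))) = iter_pyramid (A @ [w]) (\<Inter>h\<in>J. C h)"
    using meet[OF J] by (simp add: iter_pyramid_append)
qed

lemma iter_pyramid_diff_vanishes: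
  fixes G :: "(real ^ 'n::finite) set"
  assumes "lattice_polytope G" "set A \<subseteq> lattice_points" "apexes_independent A G" "iter_pyramid A G \<noteq> {}"
  shows "diff_vanishes (Suc CARD('n)) (lattice_count (iter_pyramid A G))"
  using assms
proof (induction "nat (aff_dim G)" arbitrary: G A rule: less_induct)
  case less
  note G = less.prems(1) and A = less.prems(2-4)
  show ?case
  proof (cases "aff_dim G \<le> 0")
    case True
    then show ?thesis using iter_pyramid_point_diff_vanishes G A by blast
  next
    case False
    then have dim: "0 < aff_dim G" by simp
    obtain w and H :: "(real ^ 'n) set set" and C where w: "w \<in> lattice_points"
      and H: "finite H" "H \<noteq> {}"
      and C: "\<And>h. h \<in> H \<Longrightarrow> C h face_of G \<and> C h \<noteq> G \<and> w \<notin> affine hull (C h)"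
      and cover: "G = (\<Union>h\<in>H. convex hull (insert w (C h)))"
      and meet: "\<And>J. J \<subseteq> H \<Longrightarrow> J \<noteq> {} \<Longrightarrow>
          (\<Inter>h\<in>J. convex hull (insert w (C h))) = convex hull (insert w (\<Inter>h\<in>J. C h))"
      by (rule lattice_polytope_vertex_cones[OF G dim]) blast
    have P: "polytope G" using G by (simp add: lattice_polytope_def)
    define S where "S h = iter_pyramid A (convex hull (insert w (C h)))" for h
    have convC: "convex (C h)" if "h \<in> H" for h using C[OF that] face_of_imp_convex by blast
    have cone_sub: "convex hull (insert w (C h)) \<subseteq> G" if "h \<in> H" for h using cover that by blast
    have union: "iter_pyramid A G = (\<Union>h\<in>H. S h)"
      unfolding S_def using polytope_imp_convex[OF P] H(2) convC cover meet A(2)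
      by (rule iter_pyramid_cone_cover(1))
    have inter: "(\<Inter>h\<in>J. S h) = iter_pyramid (A @ [w]) (\<Inter>h\<in>J. C h)" if "J \<subseteq> H" "J \<noteq> {}" for J
      unfolding S_def using polytope_imp_convex[OF P] H(2) convC cover meet A(2) that
      by (rule iter_pyramid_cone_cover(2))
    have bounded: "bounded (S h)" if "h \<in> H" for h
      using C[OF that] P face_of_polytope_polytope polytope_imp_compact
      unfolding S_def by (meson compact_imp_bounded compact_iter_pyramid compact_convex_hull compact_insert)
    have step: "(\<Inter>h\<in>J. S h) \<noteq> {} \<and> diff_vanishes (Suc CARD('n)) (lattice_count (\<Inter>h\<in>J. S h))"
      if J: "J \<subseteq> H" "J \<noteq> {}" for J
    proof -
      have "lattice_polytope (\<Inter>h\<in>J. C h) \<and> aff_dim (\<Inter>h\<in>J. C h) < aff_dim G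
          \<and> apexes_independent (A @ [w]) (\<Inter>h\<in>J. C h)"
        by (rule face_intersection_lower_dim[OF G J(2) _ _ A(2)]) (use C cone_sub J(1) in blast)+
      then have lat: "lattice_polytope (\<Inter>h\<in>J. C h)" and lower: "aff_dim (\<Inter>h\<in>J. C h) < aff_dim G"
        and indep: "apexes_independent (A @ [w]) (\<Inter>h\<in>J. C h)"
        by simp_all
      have ne: "iter_pyramid (A @ [w]) (\<Inter>h\<in>J. C h) \<noteq> {}" by (rule iter_pyramid_nonempty) simp
      have "nat (aff_dim (\<Inter>h\<in>J. C h)) < nat (aff_dim G)" using lower dim by simp
      moreover have "set (A @ [w]) \<subseteq> lattice_points" using A(1) w by simp
      ultimately have "diff_vanishes (Suc CARD('n)) (lattice_count (iter_pyramid (A @ [w]) (\<Inter>h\<in>J. C h)))"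
        using less.hyps lat indep ne by blast
      then show ?thesis using inter[OF J] ne by simp
    qed
    show ?thesis
      unfolding union by (rule diff_vanishes_Union[OF H(1) bounded]) (simp_all add: step)
  qed
qed

theorem lemma1:
  fixes P :: "(real ^ 'n::finite) set" and p k :: nat
  assumes "polytope P" and "P \<noteq> {}"
    and "\<forall>v. v extreme_point_of P \<longrightarrow> v \<in> lattice_points"
    and "prime p"
    and "k > nat \<lfloor>log (real p) (real CARD('n))\<rfloor>"
  shows "[card (lattice_points \<inter> ((\<lambda>x. (real p ^ k) *\<^sub>R x) ` P)) = 1]
           (mod p ^ (k - nat \<lfloor>log (real p) (real CARD('n))\<rfloor>))"
proof -
  define l where "l = nat \<lfloor>log (real p) (real CARD('n))\<rfloor>"
  have "lattice_polytope P" using assms(1,3) by (simp add: lattice_polytope_def)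
  then have vanish: "diff_vanishes (Suc CARD('n)) (lattice_count P)"
    using iter_pyramid_diff_vanishes[of P "[]"] assms(2) by simp
  have "CARD('n) < p ^ Suc l"
    unfolding l_def using floor_log_less_power prime_ge_2_nat[OF assms(4)] by simp
  then have "int (p ^ (k - l)) dvd lattice_count P (p ^ k) - lattice_count P 0"
    using diff_vanishes_prime_power_dvd[OF vanish assms(4)] assms(5) by (simp add: l_def)
  then have "[int (card (lattice_points \<inter> ((\<lambda>x. (real p ^ k) *\<^sub>R x) ` P))) = int 1] (mod int (p ^ (k - l)))"
    using lattice_count_zero[OF assms(2)] by (simp add: lattice_count_def cong_iff_dvd_diff)
  then show ?thesis unfolding l_def by (simp only: cong_int_iff)
qed

end
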